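(* For all $n\ge3$, the number $|\mathcal C_n^*|$ of essential lattice congruences of the weak order on $S_n$ satisfies $2^{2^{n-2}}\le|\mathcal C_n^*|\le 2^{2^n-2n}$. Since distinct congruences have distinct vertex sets, this is also the number $|\mathcal Q_n|$ of quotient graphs $Q_R$, $R\in\mathcal C_n^*$.
   Context: $S_n$ is the set of permutations of $[n]$ with the weak order (inclusion of inversion sets); a lattice congruence is an equivalence relation compatible with joins and meets. Fences. $]a,b[=\{a+1,\dots,b-1\}$. For $1\le a<b\le n$ and $L\subseteq\,]a,b[$, the fence $f(a,b,L)$ is the set of cover edges joining two permutations that differ by swapping adjacent entries $a,b$, with the values of $L$ to the left of $a,b$ and those of $]a,b[\setminus L$ to the right. Forcing order: $f(a,b,L)\prec f(c,d,M)$ iff $a\le c<d\le b$, $(a,b)\ne(c,d)$, $M=L\cap\,]c,d[$. Reading's theorem. Lattice congruences $R$ correspond bijectively to downsets $F_R$ of the forcing order; a cover edge joins $R$-equivalent permutations iff it lies in a fence of $F_R$. $R$ is essential if $F_R$ contains no fence $f(a,a+1,\emptyset)$; $\mathcal C_n^*$ is the set of essential lattice congruences. The quotient graph $Q_R$ is the undirected cover graph of the lattice quotient $S_n/R$ (vertices are the classes). *)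

theory Defs
  imports "HOL-Combinatorics.Permutations" "HOL-Combinatorics.Transposition"
begin

text \<open>A permutation w of [n] in one-line notation: w i is the entry at position i.\<close>

definition Sn :: "nat \<Rightarrow> (nat \<Rightarrow> nat) set" where
  "Sn n = {w. w permutes {1..n}}"

definition inversions :: "nat \<Rightarrow> (nat \<Rightarrow> nat) \<Rightarrow> (nat \<times> nat) set" where
  "inversions n w = {(a,b). 1 \<le> a \<and> a < b \<and> b \<le> n \<and>
      (\<exists>i j. 1 \<le> i \<and> i < j \<and> j \<le> n \<and> w i = b \<and> w j = a)}"

definition weak_le :: "nat \<Rightarrow> (nat \<Rightarrow> nat) \<Rightarrow> (nat \<Rightarrow> nat) \<Rightarrow> bool" where
  "weak_le n u v \<longleftrightarrow> inversions n u \<subseteq> inversions n v"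

definition is_join :: "nat \<Rightarrow> (nat \<Rightarrow> nat) \<Rightarrow> (nat \<Rightarrow> nat) \<Rightarrow> (nat \<Rightarrow> nat) \<Rightarrow> bool" where
  "is_join n x y j \<longleftrightarrow> j \<in> Sn n \<and> weak_le n x j \<and> weak_le n y j \<and>
     (\<forall>z\<in>Sn n. weak_le n x z \<and> weak_le n y z \<longrightarrow> weak_le n j z)"

definition is_meet :: "nat \<Rightarrow> (nat \<Rightarrow> nat) \<Rightarrow> (nat \<Rightarrow> nat) \<Rightarrow> (nat \<Rightarrow> nat) \<Rightarrow> bool" where
  "is_meet n x y m \<longleftrightarrow> m \<in> Sn n \<and> weak_le n m x \<and> weak_le n m y \<and>
     (\<forall>z\<in>Sn n. weak_le n z x \<and> weak_le n z y \<longrightarrow> weak_le n z m)"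

definition lattice_congruence :: "nat \<Rightarrow> ((nat \<Rightarrow> nat) \<times> (nat \<Rightarrow> nat)) set \<Rightarrow> bool" where
  "lattice_congruence n R \<longleftrightarrow> equiv (Sn n) R \<and>
     (\<forall>x\<in>Sn n. \<forall>y\<in>Sn n. \<forall>z\<in>Sn n. (x, y) \<in> R \<longrightarrow>
        (\<forall>j1 j2. is_join n x z j1 \<and> is_join n y z j2 \<longrightarrow> (j1, j2) \<in> R) \<and>
        (\<forall>m1 m2. is_meet n x z m1 \<and> is_meet n y z m2 \<longrightarrow> (m1, m2) \<in> R))"

definition fence_edges :: "nat \<Rightarrow> nat \<Rightarrow> nat \<Rightarrow> nat set \<Rightarrow> ((nat \<Rightarrow> nat) \<times> (nat \<Rightarrow> nat)) set" where
  "fence_edges n a b L = {(u, v). u \<in> Sn n \<and>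
     (\<exists>i. 1 \<le> i \<and> i + 1 \<le> n \<and> u i = a \<and> u (i + 1) = b \<and>
        v = u \<circ> transpose i (i + 1) \<and>
        (\<forall>j\<in>{1..n}. u j \<in> L \<longrightarrow> j < i) \<and>
        (\<forall>j\<in>{1..n}. u j \<in> {a<..<b} - L \<longrightarrow> i + 1 < j))}"

text \<open>The fence f(a,b,L) belongs to F_R (Reading's theorem: exactly when its edges join
  R-equivalent permutations).\<close>
definition fence_in_FR :: "nat \<Rightarrow> ((nat \<Rightarrow> nat) \<times> (nat \<Rightarrow> nat)) set \<Rightarrow> nat \<Rightarrow> nat \<Rightarrow> nat set \<Rightarrow> bool" where
  "fence_in_FR n R a b L \<longleftrightarrow> (\<forall>(u, v)\<in>fence_edges n a b L. (u, v) \<in> R)"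

definition essential :: "nat \<Rightarrow> ((nat \<Rightarrow> nat) \<times> (nat \<Rightarrow> nat)) set \<Rightarrow> bool" where
  "essential n R \<longleftrightarrow> (\<forall>a. 1 \<le> a \<and> a + 1 \<le> n \<longrightarrow> \<not> fence_in_FR n R a (a + 1) {})"

definition essential_congruences :: "nat \<Rightarrow> ((nat \<Rightarrow> nat) \<times> (nat \<Rightarrow> nat)) set set" where
  "essential_congruences n = {R. lattice_congruence n R \<and> essential n R}"

text \<open>Quotient lattice S_n/R: classes ordered by X \<le> Y iff some x\<in>X, y\<in>Y with x \<le> y.
  Q_R is its undirected cover graph: (vertex set, edge set of 2-sets).\<close>
definition quot_le :: "nat \<Rightarrow> (nat \<Rightarrow> nat) set \<Rightarrow> (nat \<Rightarrow> nat) set \<Rightarrow> bool" where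
  "quot_le n X Y \<longleftrightarrow> (\<exists>x\<in>X. \<exists>y\<in>Y. weak_le n x y)"

definition quotient_graph :: "nat \<Rightarrow> ((nat \<Rightarrow> nat) \<times> (nat \<Rightarrow> nat)) set
    \<Rightarrow> (nat \<Rightarrow> nat) set set \<times> (nat \<Rightarrow> nat) set set set" where
  "quotient_graph n R = (Sn n // R,
     {{X, Y} | X Y. X \<in> Sn n // R \<and> Y \<in> Sn n // R \<and> X \<noteq> Y \<and> quot_le n X Y \<and>
        (\<forall>Z\<in>Sn n // R. quot_le n X Z \<and> quot_le n Z Y \<longrightarrow> Z = X \<or> Z = Y)})"

end

theory Submission
  imports Defs
begin

text \<open>Inversion sets of permutations are exactly the transitive and cotransitive sets of pairs,
  which makes joins and meets of the weak order explicit (transitive closures) and lets all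
  arguments run on inversion sets.

  Lower bound: the fences \<open>f(1, n, L)\<close>, \<open>L \<subseteq> {2..n-1}\<close>, are minimal in the forcing order, so
  every set of them is contracted by a congruence, namely the one identifying two permutations
  whose inversion sets differ only in \<open>(1, n)\<close>, provided the values left of \<open>1\<close> form an allowed
  label. Adding or removing the extreme pair \<open>(1, n)\<close> commutes with joins and
  meets, and for \<open>n \<ge> 3\<close> no fence \<open>f(a, a + 1, {})\<close> is contracted.

  Upper bound: a congruence is determined by the join-irreducibles \<open>j\<close> (one descent) that it
  identifies with the element \<open>j\<^sub>*\<close> they cover, because every cover is perspective to such a
  pair. A join-irreducible is determined by the set of values in front of its descent, which
  is not an initial segment, and essential congruences identify none of the \<open>n - 1\<close> atoms.

  Finally, a congruence is determined by its classes, i.e. by the vertex set of its quotient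
  graph.\<close>

lemma Sn_permutes: "w \<in> Sn n \<Longrightarrow> w permutes {1..n}"
  by (simp add: Sn_def)

lemma id_in_Sn: "id \<in> Sn n"
  by (simp add: Sn_def)

lemma finite_Sn: "finite (Sn n)"
  unfolding Sn_def using finite_permutations by blast

lemma Sn_in: "w \<in> Sn n \<Longrightarrow> x \<in> {1..n} \<Longrightarrow> w x \<in> {1..n}"
  using permutes_in_image[OF Sn_permutes] by blast

lemma Sn_inv_in: "w \<in> Sn n \<Longrightarrow> x \<in> {1..n} \<Longrightarrow> inv w x \<in> {1..n}"
  using permutes_in_image[OF permutes_inv[OF Sn_permutes]] by blast

lemma Sn_inj: "w \<in> Sn n \<Longrightarrow> w x = w y \<Longrightarrow> x = y"
  using permutes_inj[OF Sn_permutes] by (metis injD)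

lemma Sn_inv_inj: "w \<in> Sn n \<Longrightarrow> inv w x = inv w y \<Longrightarrow> x = y"
  by (metis Sn_permutes permutes_inverses(1))

lemma Sn_apply_inv: "w \<in> Sn n \<Longrightarrow> w (inv w x) = x"
  by (metis Sn_permutes permutes_inverses(1))

lemma Sn_inv_apply: "w \<in> Sn n \<Longrightarrow> inv w (w x) = x"
  by (metis Sn_permutes permutes_inverses(2))

text \<open>\<open>inv w c\<close> is the position of the value \<open>c\<close>.\<close>

lemma mem_inversions_iff:
  assumes w: "w \<in> Sn n"
  shows "(a, b) \<in> inversions n w \<longleftrightarrow> 1 \<le> a \<and> a < b \<and> b \<le> n \<and> inv w b < inv w a"
proof
  assume "(a, b) \<in> inversions n w"
  then obtain i j where h: "1 \<le> a" "a < b" "b \<le> n" "i < j" "w i = b" "w j = a"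
    unfolding inversions_def by blast
  then have "inv w b = i" "inv w a = j"
    using Sn_inv_apply[OF w] by blast+
  with h show "1 \<le> a \<and> a < b \<and> b \<le> n \<and> inv w b < inv w a"
    by simp
next
  assume h: "1 \<le> a \<and> a < b \<and> b \<le> n \<and> inv w b < inv w a"
  then have "inv w a \<in> {1..n}" "inv w b \<in> {1..n}"
    using Sn_inv_in[OF w] by auto
  moreover have "w (inv w a) = a" "w (inv w b) = b"
    using Sn_apply_inv[OF w] by blast+
  ultimately show "(a, b) \<in> inversions n w"
    unfolding inversions_def using h by (simp only: mem_Collect_eq case_prod_conv) force
qed

lemma finite_inversions: "finite (inversions n w)"
proof -
  have "inversions n w \<subseteq> {1..n} \<times> {1..n}"
    unfolding inversions_def by auto
  then show ?thesis
    by (rule finite_subset) simp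
qed

lemma inversions_id: "inversions n id = {}"
  using mem_inversions_iff[OF id_in_Sn] by (auto simp: inv_id)

definition pairs :: "nat \<Rightarrow> (nat \<times> nat) set" where
  "pairs n = {(a, b). 1 \<le> a \<and> a < b \<and> b \<le> n}"

definition transitive_cotransitive :: "nat \<Rightarrow> (nat \<times> nat) set \<Rightarrow> bool" where
  "transitive_cotransitive n I \<longleftrightarrow> I \<subseteq> pairs n
     \<and> (\<forall>a b c. (a, b) \<in> I \<longrightarrow> (b, c) \<in> I \<longrightarrow> (a, c) \<in> I)
     \<and> (\<forall>a b c. (a, c) \<in> I \<longrightarrow> a < b \<longrightarrow> b < c \<longrightarrow> (a, b) \<in> I \<or> (b, c) \<in> I)"

lemma transitive_cotransitive_pairsD:
  "transitive_cotransitive n I \<Longrightarrow> (a, b) \<in> I \<Longrightarrow> 1 \<le> a \<and> a < b \<and> b \<le> n"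
  unfolding transitive_cotransitive_def pairs_def by blast

lemma transitive_cotransitive_transD:
  "transitive_cotransitive n I \<Longrightarrow> (a, b) \<in> I \<Longrightarrow> (b, c) \<in> I \<Longrightarrow> (a, c) \<in> I"
  unfolding transitive_cotransitive_def by blast

lemma transitive_cotransitive_cotransD:
  "transitive_cotransitive n I \<Longrightarrow> (a, c) \<in> I \<Longrightarrow> a < b \<Longrightarrow> b < c \<Longrightarrow> (a, b) \<in> I \<or> (b, c) \<in> I"
  unfolding transitive_cotransitive_def by blast

lemma transitive_cotransitive_inversions:
  assumes w: "w \<in> Sn n"
  shows "transitive_cotransitive n (inversions n w)"
proof -
  have "inv w b < inv w a \<or> inv w c < inv w b" if "inv w c < inv w a" "a < b" "b < c" for a b c
    using that Sn_inv_inj[OF w, of b a] Sn_inv_inj[OF w, of b c] by (metis less_trans nat_neq_iff)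
  then show ?thesis
    unfolding transitive_cotransitive_def pairs_def by (auto simp: mem_inversions_iff[OF w])
qed

lemma inversions_subset_pairs: "w \<in> Sn n \<Longrightarrow> inversions n w \<subseteq> pairs n"
  using transitive_cotransitive_inversions unfolding transitive_cotransitive_def by blast

lemma card_less_in_permutes:
  assumes p: "q permutes {1..n}" and a: "a \<in> {1..n}"
  shows "card {b \<in> {1..n}. q b < q a} = q a - 1"
proof -
  have "q ` {b \<in> {1..n}. q b < q a} = q ` {1..n} \<inter> {i. i < q a}"
    by blast
  also have "\<dots> = {1..<q a}"
    using permutes_image[OF p] permutes_in_image[OF p, of a] a by auto
  finally show ?thesis
    using permutes_inj_on[OF p] by (metis card_atLeastLessThan card_image)
qed

text \<open>The position of a value is one more than the number of values placed before it, and the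
  inversion set tells which values these are.\<close>

lemma inversions_inject:
  assumes u: "u \<in> Sn n" and v: "v \<in> Sn n" and eq: "inversions n u = inversions n v"
  shows "u = v"
proof -
  have before: "inv u b < inv u a \<longleftrightarrow> inv v b < inv v a" if "a \<in> {1..n}" "b \<in> {1..n}" for a b
  proof (cases a b rule: linorder_cases)
    case less
    have "(a, b) \<in> inversions n u \<longleftrightarrow> (a, b) \<in> inversions n v"
      using eq by simp
    then show ?thesis
      using less that unfolding mem_inversions_iff[OF u] mem_inversions_iff[OF v] by simp
  next
    case greater
    have "inv u a \<noteq> inv u b" "inv v a \<noteq> inv v b"
      using greater Sn_inv_inj[OF u, of a b] Sn_inv_inj[OF v, of a b] by auto
    moreover have "(b, a) \<in> inversions n u \<longleftrightarrow> (b, a) \<in> inversions n v"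
      using eq by simp
    then have "inv u a < inv u b \<longleftrightarrow> inv v a < inv v b"
      using greater that unfolding mem_inversions_iff[OF u] mem_inversions_iff[OF v] by simp
    ultimately show ?thesis
      by auto
  qed simp
  have "inv u a = inv v a" for a
  proof (cases "a \<in> {1..n}")
    case True
    have "{b \<in> {1..n}. inv u b < inv u a} = {b \<in> {1..n}. inv v b < inv v a}"
      using before[OF True] by blast
    then have "inv u a - 1 = inv v a - 1"
      using card_less_in_permutes[OF permutes_inv[OF Sn_permutes[OF u]] True]
        card_less_in_permutes[OF permutes_inv[OF Sn_permutes[OF v]] True] by simp
    moreover have "1 \<le> inv u a" "1 \<le> inv v a"
      using Sn_inv_in[OF u True] Sn_inv_in[OF v True] by auto
    ultimately show ?thesis
      by linarith
  next
    case False
    then show ?thesis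
      using permutes_not_in[OF permutes_inv[OF Sn_permutes[OF u]]]
        permutes_not_in[OF permutes_inv[OF Sn_permutes[OF v]]] by simp
  qed
  then have "inv u = inv v"
    by blast
  then show ?thesis
    using permutes_inv_inv[OF Sn_permutes[OF u]] permutes_inv_inv[OF Sn_permutes[OF v]] by metis
qed

lemma weak_le_antisym: "u \<in> Sn n \<Longrightarrow> v \<in> Sn n \<Longrightarrow> weak_le n u v \<Longrightarrow> weak_le n v u \<Longrightarrow> u = v"
  unfolding weak_le_def using inversions_inject by blast

section \<open>Transitive and cotransitive sets are inversion sets\<close>

text \<open>\<open>placed_before I b a\<close>: in the permutation with inversion set \<open>I\<close>, the value \<open>b\<close>
  stands to the left of \<open>a\<close>.\<close>

definition placed_before :: "(nat \<times> nat) set \<Rightarrow> nat \<Rightarrow> nat \<Rightarrow> bool" where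
  "placed_before I b a \<longleftrightarrow> (a < b \<and> (a, b) \<in> I) \<or> (b < a \<and> (b, a) \<notin> I)"

lemma placed_before_irrefl: "\<not> placed_before I a a"
  by (simp add: placed_before_def)

lemma placed_before_total: "a \<noteq> b \<Longrightarrow> placed_before I a b \<or> placed_before I b a"
  unfolding placed_before_def by (cases a b rule: linorder_cases) auto

lemma placed_before_trans:
  assumes tc: "transitive_cotransitive n I"
    and "placed_before I c b" and "placed_before I b a"
  shows "placed_before I c a"
  using assms(2,3) unfolding placed_before_def
  by (cases a b rule: linorder_cases; cases b c rule: linorder_cases; cases a c rule: linorder_cases)
    (auto dest: transitive_cotransitive_transD[OF tc] transitive_cotransitive_cotransD[OF tc])

text \<open>The permutation is read off from \<open>placed_before\<close>: the position of \<open>a\<close> is one more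
  than the number of values placed before it.\<close>

lemma transitive_cotransitive_imp_inversions:
  assumes tc: "transitive_cotransitive n I"
  shows "\<exists>w\<in>Sn n. inversions n w = I"
proof -
  define before where "before a = {c \<in> {1..n}. placed_before I c a}" for a
  define pos where "pos a = (if a \<in> {1..n} then card (before a) + 1 else a)" for a
  have card_before_less: "card (before b) < card (before a)"
    if "placed_before I b a" "b \<in> {1..n}" for a b
  proof (rule psubset_card_mono)
    show "finite (before a)"
      unfolding before_def by simp
    have "before b \<subseteq> before a"
      unfolding before_def using placed_before_trans[OF tc _ that(1)] by blast
    moreover have "b \<in> before a - before b"
      unfolding before_def using that placed_before_irrefl by simp
    ultimately show "before b \<subset> before a"
      by blast
  qed
  have pos_less_iff: "pos b < pos a \<longleftrightarrow> placed_before I b a"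
    if "a \<in> {1..n}" "b \<in> {1..n}" "a \<noteq> b" for a b
    using that card_before_less[of b a] card_before_less[of a b] placed_before_total[OF \<open>a \<noteq> b\<close>, of I]
    unfolding pos_def by fastforce
  have "inj_on pos {1..n}"
  proof (rule inj_onI, rule ccontr)
    fix a b assume "a \<in> {1..n}" "b \<in> {1..n}" "pos a = pos b" "a \<noteq> b"
    then show False
      using pos_less_iff[of a b] pos_less_iff[of b a] placed_before_total[of a b I] by auto
  qed
  moreover have "pos a \<in> {1..n}" if "a \<in> {1..n}" for a
  proof -
    have "before a \<subseteq> {1..n} - {a}"
      unfolding before_def using placed_before_irrefl by blast
    then have "card (before a) \<le> n - 1"
      using card_mono[of "{1..n} - {a}" "before a"] that by simp
    then show ?thesis
      using that unfolding pos_def by auto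
  qed
  ultimately have pos: "pos permutes {1..n}"
    by (intro inj_imp_permutes) (auto simp: pos_def)
  define w where "w = inv pos"
  have w: "w \<in> Sn n"
    unfolding w_def Sn_def using permutes_inv[OF pos] by simp
  have inv_w: "inv w = pos"
    unfolding w_def using permutes_inv_inv[OF pos] .
  have "(a, b) \<in> inversions n w \<longleftrightarrow> (a, b) \<in> I" for a b
  proof -
    have "(a, b) \<in> I \<Longrightarrow> 1 \<le> a \<and> a < b \<and> b \<le> n"
      using transitive_cotransitive_pairsD[OF tc] .
    then show ?thesis
      unfolding mem_inversions_iff[OF w] inv_w
      using pos_less_iff[of a b] by (auto simp: placed_before_def)
  qed
  then have "inversions n w = I"
    by auto
  then show ?thesis
    using w by blast
qed

lemma transitive_cotransitive_complement:
  assumes tc: "transitive_cotransitive n I"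
  shows "transitive_cotransitive n (pairs n - I)"
proof -
  have "(a, c) \<in> pairs n - I" if "(a, b) \<in> pairs n - I" "(b, c) \<in> pairs n - I" for a b c
    using that transitive_cotransitive_cotransD[OF tc, of a c b] unfolding pairs_def by auto
  moreover have "(a, b) \<in> pairs n - I \<or> (b, c) \<in> pairs n - I"
    if "(a, c) \<in> pairs n - I" "a < b" "b < c" for a b c
    using that transitive_cotransitive_transD[OF tc, of a b c] unfolding pairs_def by auto
  ultimately show ?thesis
    unfolding transitive_cotransitive_def by blast
qed

lemma transitive_cotransitive_trancl:
  assumes sub: "I \<subseteq> pairs n"
    and C: "\<And>a b c. (a, c) \<in> I \<Longrightarrow> a < b \<Longrightarrow> b < c \<Longrightarrow> (a, b) \<in> I \<or> (b, c) \<in> I"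
  shows "transitive_cotransitive n (I\<^sup>+)"
proof -
  have "(a, c) \<in> pairs n" if "(a, c) \<in> I\<^sup>+" for a c
    using that by (induction rule: trancl_induct) (use sub in \<open>auto simp: pairs_def\<close>)
  then have "I\<^sup>+ \<subseteq> pairs n"
    by auto
  moreover have "(a, b) \<in> I\<^sup>+ \<or> (b, c) \<in> I\<^sup>+" if "(a, c) \<in> I\<^sup>+" "a < b" "b < c" for a b c
    using that
  proof (induction arbitrary: b rule: trancl_induct)
    case (base c)
    then show ?case
      using C by blast
  next
    case (step d c)
    have "d < c"
      using sub step.hyps(2) unfolding pairs_def by auto
    consider "b < d" | "b = d" | "d < b"
      by linarith
    then show ?case
    proof cases
      case 1
      then show ?thesis
        using step.IH[of b] step.prems(1) step.hyps(2) by (meson trancl.trancl_into_trancl)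
    next
      case 2
      then show ?thesis
        using step.hyps(1) by simp
    next
      case 3
      then have "(d, b) \<in> I \<or> (b, c) \<in> I"
        using C step.hyps(2) step.prems(2) by blast
      then show ?thesis
        using step.hyps(1) by (meson r_into_trancl' trancl.trancl_into_trancl)
    qed
  qed
  ultimately show ?thesis
    unfolding transitive_cotransitive_def by (meson trancl_trans)
qed

lemma transitive_cotransitive_Un_trancl:
  assumes "transitive_cotransitive n I" "transitive_cotransitive n J"
  shows "transitive_cotransitive n ((I \<union> J)\<^sup>+)"
proof (rule transitive_cotransitive_trancl)
  show "I \<union> J \<subseteq> pairs n"
    using assms unfolding transitive_cotransitive_def by blast
  show "(a, b) \<in> I \<union> J \<or> (b, c) \<in> I \<union> J" if "(a, c) \<in> I \<union> J" "a < b" "b < c" for a b c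
    using assms that unfolding transitive_cotransitive_def by blast
qed

lemma trancl_subset_transitive_cotransitive:
  assumes "transitive_cotransitive n Z" "I \<subseteq> Z"
  shows "I\<^sup>+ \<subseteq> Z"
proof -
  have "trans Z"
    using assms(1) unfolding transitive_cotransitive_def trans_def by blast
  then show ?thesis
    using assms(2) by (metis trancl_id trancl_mono subsetI)
qed

text \<open>The join is the permutation whose inversion set is the transitive closure of the union.\<close>

lemma exists_is_join:
  assumes x: "x \<in> Sn n" and y: "y \<in> Sn n"
  shows "\<exists>j. is_join n x y j"
proof -
  let ?I = "inversions n x \<union> inversions n y"
  have tc: "transitive_cotransitive n (?I\<^sup>+)"
    using transitive_cotransitive_Un_trancl transitive_cotransitive_inversions x y by blast
  obtain j where j: "j \<in> Sn n" "inversions n j = ?I\<^sup>+"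
    using transitive_cotransitive_imp_inversions[OF tc] by blast
  have "is_join n x y j"
    unfolding is_join_def weak_le_def
    using j trancl_subset_transitive_cotransitive[OF transitive_cotransitive_inversions] by auto
  then show ?thesis
    by blast
qed

text \<open>Dually, the complement of the meet's inversion set is the transitive closure of the union
  of the complements.\<close>

lemma exists_is_meet:
  assumes x: "x \<in> Sn n" and y: "y \<in> Sn n"
  shows "\<exists>m. is_meet n x y m"
proof -
  let ?I = "(pairs n - inversions n x) \<union> (pairs n - inversions n y)"
  have "transitive_cotransitive n (?I\<^sup>+)"
    using transitive_cotransitive_Un_trancl transitive_cotransitive_complement
      transitive_cotransitive_inversions x y by blast
  then obtain m where m: "m \<in> Sn n" "inversions n m = pairs n - ?I\<^sup>+"
    using transitive_cotransitive_imp_inversions[OF transitive_cotransitive_complement] by blast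
  have below: "inversions n z \<subseteq> inversions n m"
    if "z \<in> Sn n" "inversions n z \<subseteq> inversions n x" "inversions n z \<subseteq> inversions n y" for z
  proof -
    have "?I\<^sup>+ \<subseteq> pairs n - inversions n z"
      using that by (intro trancl_subset_transitive_cotransitive[OF
            transitive_cotransitive_complement[OF transitive_cotransitive_inversions]]) auto
    then show ?thesis
      using m(2) inversions_subset_pairs[OF that(1)] by blast
  qed
  have "is_meet n x y m"
    unfolding is_meet_def weak_le_def
    using m below inversions_subset_pairs[OF x] inversions_subset_pairs[OF y] by auto
  then show ?thesis
    by blast
qed

lemma is_join_unique: "is_join n x y j \<Longrightarrow> is_join n x y j' \<Longrightarrow> j = j'"
  unfolding is_join_def using weak_le_antisym by blast

lemma is_meet_unique: "is_meet n x y m \<Longrightarrow> is_meet n x y m' \<Longrightarrow> m = m'"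
  unfolding is_meet_def using weak_le_antisym by blast

lemma is_joinD:
  "is_join n x y j \<Longrightarrow> j \<in> Sn n \<and> inversions n x \<subseteq> inversions n j \<and> inversions n y \<subseteq> inversions n j"
  unfolding is_join_def weak_le_def by blast

lemma is_join_least:
  "is_join n x y j \<Longrightarrow> w \<in> Sn n \<Longrightarrow> inversions n x \<subseteq> inversions n w \<Longrightarrow> inversions n y \<subseteq> inversions n w
    \<Longrightarrow> inversions n j \<subseteq> inversions n w"
  unfolding is_join_def weak_le_def by blast

lemma is_meetD:
  "is_meet n x y m \<Longrightarrow> m \<in> Sn n \<and> inversions n m \<subseteq> inversions n x \<and> inversions n m \<subseteq> inversions n y"
  unfolding is_meet_def weak_le_def by blast

lemma is_meet_greatest:
  "is_meet n x y m \<Longrightarrow> w \<in> Sn n \<Longrightarrow> inversions n w \<subseteq> inversions n x \<Longrightarrow> inversions n w \<subseteq> inversions n y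
    \<Longrightarrow> inversions n w \<subseteq> inversions n m"
  unfolding is_meet_def weak_le_def by blast

lemma is_join_of_le: "x \<in> Sn n \<Longrightarrow> y \<in> Sn n \<Longrightarrow> inversions n x \<subseteq> inversions n y \<Longrightarrow> is_join n x y y"
  unfolding is_join_def weak_le_def by blast

lemma is_join_of_ge: "x \<in> Sn n \<Longrightarrow> y \<in> Sn n \<Longrightarrow> inversions n y \<subseteq> inversions n x \<Longrightarrow> is_join n x y x"
  unfolding is_join_def weak_le_def by blast

lemma is_join_self: "x \<in> Sn n \<Longrightarrow> is_join n x x x"
  unfolding is_join_def weak_le_def by blast

lemma is_meet_self: "x \<in> Sn n \<Longrightarrow> is_meet n x x x"
  unfolding is_meet_def weak_le_def by blast

text \<open>Composing on the right with \<open>adj_swap i\<close> exchanges the entries in positions \<open>i\<close> and \<open>i + 1\<close>.\<close>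

abbreviation adj_swap :: "nat \<Rightarrow> nat \<Rightarrow> nat" where
  "adj_swap i \<equiv> transpose i (i + 1)"

definition descent :: "nat \<Rightarrow> (nat \<Rightarrow> nat) \<Rightarrow> nat \<Rightarrow> bool" where
  "descent n w k \<longleftrightarrow> 1 \<le> k \<and> k + 1 \<le> n \<and> w (k + 1) < w k"

lemma adj_swap_in_Sn: "1 \<le> i \<Longrightarrow> i + 1 \<le> n \<Longrightarrow> adj_swap i \<in> Sn n"
  unfolding Sn_def by (simp add: permutes_swap_id)

lemma comp_adj_swap_in_Sn: "w \<in> Sn n \<Longrightarrow> 1 \<le> i \<Longrightarrow> i + 1 \<le> n \<Longrightarrow> w \<circ> adj_swap i \<in> Sn n"
  using adj_swap_in_Sn permutes_compose unfolding Sn_def by blast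

lemma inv_comp_adj_swap:
  assumes w: "w \<in> Sn n" and i: "1 \<le> i" "i + 1 \<le> n"
  shows "inv (w \<circ> adj_swap i) c = adj_swap i (inv w c)"
proof -
  have "(w \<circ> adj_swap i) (adj_swap i (inv w c)) = c"
    using Sn_apply_inv[OF w] by simp
  then show ?thesis
    using Sn_inv_apply[OF comp_adj_swap_in_Sn[OF w i]] by metis
qed

lemma adj_swap_less_iff:
  "x \<noteq> y \<Longrightarrow> adj_swap i x < adj_swap i y \<longleftrightarrow> (x < y \<and> \<not> (x = i \<and> y = i + 1)) \<or> (x = i + 1 \<and> y = i)"
  unfolding transpose_def by auto

lemma inversions_comp_adj_swap_ascent:
  assumes w: "w \<in> Sn n" and i: "1 \<le> i" "i + 1 \<le> n" and asc: "w i < w (i + 1)"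
  shows "inversions n (w \<circ> adj_swap i) = insert (w i, w (i + 1)) (inversions n w)"
proof -
  have "(a, b) \<in> inversions n (w \<circ> adj_swap i) \<longleftrightarrow> (a, b) \<in> insert (w i, w (i + 1)) (inversions n w)"
    if ab: "1 \<le> a" "a < b" "b \<le> n" for a b
  proof -
    have "inv w b \<noteq> inv w a"
      using Sn_inv_inj[OF w] ab by fastforce
    moreover have "\<not> (inv w b = i \<and> inv w a = i + 1)"
      using Sn_apply_inv[OF w, of a] Sn_apply_inv[OF w, of b] ab asc by auto
    moreover have "inv w b = i + 1 \<and> inv w a = i \<longleftrightarrow> (a, b) = (w i, w (i + 1))"
      using Sn_apply_inv[OF w, of a] Sn_apply_inv[OF w, of b] Sn_inv_apply[OF w] by auto
    moreover have "(a, b) \<in> inversions n w \<longleftrightarrow> inv w b < inv w a"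
      using mem_inversions_iff[OF w] ab by simp
    moreover have "(a, b) \<in> inversions n (w \<circ> adj_swap i) \<longleftrightarrow> adj_swap i (inv w b) < adj_swap i (inv w a)"
      using mem_inversions_iff[OF comp_adj_swap_in_Sn[OF w i]] inv_comp_adj_swap[OF w i] ab by simp
    ultimately show ?thesis
      using adj_swap_less_iff[OF \<open>inv w b \<noteq> inv w a\<close>] by auto
  qed
  moreover have "w i \<in> {1..n}" "w (i + 1) \<in> {1..n}"
    using Sn_in[OF w] i by auto
  ultimately show ?thesis
    using asc mem_inversions_iff[OF w] mem_inversions_iff[OF comp_adj_swap_in_Sn[OF w i]]
    by (auto simp del: comp_apply)
qed

lemma inversions_comp_adj_swap_descent:
  assumes w: "w \<in> Sn n" and d: "descent n w i"
  shows "inversions n (w \<circ> adj_swap i) = inversions n w - {(w (i + 1), w i)}"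
proof -
  let ?v = "w \<circ> adj_swap i"
  have i: "1 \<le> i" "i + 1 \<le> n" and desc: "w (i + 1) < w i"
    using d unfolding descent_def by auto
  have "inversions n (?v \<circ> adj_swap i) = insert (?v i, ?v (i + 1)) (inversions n ?v)"
    using inversions_comp_adj_swap_ascent[OF comp_adj_swap_in_Sn[OF w i] i] desc by simp
  moreover have "?v \<circ> adj_swap i = w"
    by (simp add: comp_assoc)
  moreover have "(w (i + 1), w i) \<notin> inversions n ?v"
    using mem_inversions_iff[OF comp_adj_swap_in_Sn[OF w i]] inv_comp_adj_swap[OF w i]
      Sn_inv_apply[OF w] by simp
  ultimately show ?thesis
    by auto
qed

lemma descent_pair_mem_inversions:
  assumes j: "j \<in> Sn n" and d: "descent n j k"
  shows "(j (k + 1), j k) \<in> inversions n j"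
proof -
  have k: "1 \<le> k" "k + 1 \<le> n" "j (k + 1) < j k"
    using d unfolding descent_def by auto
  then have "j (k + 1) \<in> {1..n}" "j k \<in> {1..n}"
    using Sn_in[OF j] by auto
  then show ?thesis
    using mem_inversions_iff[OF j] Sn_inv_apply[OF j] k by simp
qed

lemma inversions_adj_swap:
  "1 \<le> a \<Longrightarrow> a + 1 \<le> n \<Longrightarrow> inversions n (adj_swap a) = {(a, a + 1)}"
  using inversions_comp_adj_swap_ascent[OF id_in_Sn, of a n] inversions_id by simp

lemma less_of_ascents:
  assumes asc: "\<And>k. p \<le> k \<Longrightarrow> k < q \<Longrightarrow> (w :: nat \<Rightarrow> nat) k < w (k + 1)" and "p < q"
  shows "w p < w q"
proof -
  have "Suc p \<le> q"
    using \<open>p < q\<close> by simp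
  then show ?thesis
    by (induction rule: dec_induct) (use asc \<open>p < q\<close> in \<open>auto intro: less_trans\<close>)
qed

lemma exists_descent:
  assumes w: "w \<in> Sn n" and ne: "inversions n w \<noteq> {}"
  shows "\<exists>k. descent n w k"
proof (rule ccontr)
  assume none: "\<nexists>k. descent n w k"
  have asc: "w k < w (k + 1)" if "1 \<le> k" "k < n" for k
  proof -
    have "\<not> w (k + 1) < w k"
      using none that unfolding descent_def by auto
    moreover have "w (k + 1) \<noteq> w k"
      using Sn_inj[OF w, of "k + 1" k] by auto
    ultimately show ?thesis
      by simp
  qed
  obtain a b where "(a, b) \<in> inversions n w"
    using ne by auto
  then have ab: "1 \<le> a" "a < b" "b \<le> n" "inv w b < inv w a"
    using mem_inversions_iff[OF w] by auto
  then have "w (inv w b) < w (inv w a)"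
    using less_of_ascents[of "inv w b" "inv w a" w] asc Sn_inv_in[OF w, of a] Sn_inv_in[OF w, of b]
    by fastforce
  then show False
    using Sn_apply_inv[OF w] ab by simp
qed

lemma new_inversion_between:
  assumes u: "u \<in> Sn n" and v: "v \<in> Sn n" and sub: "inversions n u \<subseteq> inversions n v"
    and ab: "(a, b) \<in> inversions n v - inversions n u"
    and c: "c \<in> {1..n}" "inv u a < inv u c" "inv u c < inv u b"
  shows "(a, c) \<in> inversions n v - inversions n u \<or> (c, b) \<in> inversions n v - inversions n u"
proof -
  have tv: "transitive_cotransitive n (inversions n v)"
    using transitive_cotransitive_inversions[OF v] .
  have ab_range: "1 \<le> a" "a < b" "b \<le> n"
    using ab mem_inversions_iff[OF v] by auto
  have new: "(x, y) \<notin> inversions n u" if "inv u x < inv u y" for x y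
    using that mem_inversions_iff[OF u] by auto
  consider "c < a" | "a < c" "c < b" | "b < c"
    using c by (metis less_irrefl nat_neq_iff)
  then show ?thesis
  proof cases
    case 1
    then have "(c, a) \<in> inversions n v"
      using sub c ab_range mem_inversions_iff[OF u] by auto
    then have "(c, b) \<in> inversions n v"
      using transitive_cotransitive_transD[OF tv] ab by blast
    then show ?thesis
      using new c(3) by blast
  next
    case 2
    then show ?thesis
      using transitive_cotransitive_cotransD[OF tv _ 2] ab new c(2,3) by blast
  next
    case 3
    then have "(b, c) \<in> inversions n v"
      using sub c ab_range mem_inversions_iff[OF u] by auto
    then have "(a, c) \<in> inversions n v"
      using transitive_cotransitive_transD[OF tv] ab by blast
    then show ?thesis
      using new c(2) by blast
  qed
qed

text \<open>If \<open>u < v\<close> in the weak order, some ascent of \<open>u\<close> is inverted in \<open>v\<close>: a new inversion of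
  \<open>v\<close> whose entries are closest in \<open>u\<close> is such an ascent.\<close>

lemma exists_ascent_inverted:
  assumes u: "u \<in> Sn n" and v: "v \<in> Sn n" and sub: "inversions n u \<subseteq> inversions n v"
    and ne: "inversions n u \<noteq> inversions n v"
  shows "\<exists>i. 1 \<le> i \<and> i + 1 \<le> n \<and> u i < u (i + 1) \<and> (u i, u (i + 1)) \<in> inversions n v"
proof -
  let ?D = "inversions n v - inversions n u"
  have "\<exists>p. p \<in> ?D"
    using sub ne by blast
  then obtain a b where ab: "(a, b) \<in> ?D"
    and closest: "\<And>x y. (x, y) \<in> ?D \<Longrightarrow> inv u b - inv u a \<le> inv u y - inv u x"
    using ex_has_least_nat[of "\<lambda>p. p \<in> ?D" _ "\<lambda>(x, y). inv u y - inv u x"] by fastforce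
  have ab_range: "1 \<le> a" "a < b" "b \<le> n"
    using ab mem_inversions_iff[OF v] by auto
  have ab_pos: "inv u a \<in> {1..n}" "inv u b \<in> {1..n}"
    using Sn_inv_in[OF u] ab_range by auto
  have "inv u a < inv u b"
    using ab ab_range Sn_inv_inj[OF u, of a b] mem_inversions_iff[OF u] by fastforce
  moreover have "\<not> inv u a + 1 < inv u b"
  proof
    assume k: "inv u a + 1 < inv u b"
    define c where "c = u (inv u a + 1)"
    have c_pos: "inv u c = inv u a + 1"
      unfolding c_def using Sn_inv_apply[OF u] .
    have "c \<in> {1..n}"
      unfolding c_def using Sn_in[OF u, of "inv u a + 1"] ab_pos k by auto
    then show False
      using new_inversion_between[OF u v sub ab] closest[of a c] closest[of c b] c_pos k by fastforce
  qed
  ultimately have adjacent: "inv u b = inv u a + 1"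
    by simp
  show ?thesis
  proof (intro exI conjI)
    show "1 \<le> inv u a" "inv u a + 1 \<le> n"
      using ab_pos adjacent by auto
    show "u (inv u a) < u (inv u a + 1)" "(u (inv u a), u (inv u a + 1)) \<in> inversions n v"
      using ab ab_range adjacent Sn_apply_inv[OF u, of a] Sn_apply_inv[OF u, of b] by auto
  qed
qed

section \<open>Lower bound: congruences contracting fences \<open>f(1, n, L)\<close>\<close>

text \<open>If \<open>1\<close> and \<open>n\<close> are adjacent in \<open>w\<close>, the edge swapping them lies in the fence
  \<open>f(1, n, fence_label n w)\<close>.\<close>

definition fence_label :: "nat \<Rightarrow> (nat \<Rightarrow> nat) \<Rightarrow> nat set" where
  "fence_label n w = {c \<in> {2..n - 1}. (1, c) \<in> inversions n w}"

text \<open>\<open>top_fence_congruence n S\<close> contracts exactly the fences \<open>f(1, n, L)\<close> with \<open>L \<in> S\<close>.\<close>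

definition top_fence_congruence :: "nat \<Rightarrow> nat set set \<Rightarrow> ((nat \<Rightarrow> nat) \<times> (nat \<Rightarrow> nat)) set" where
  "top_fence_congruence n S = {(x, y). x \<in> Sn n \<and> y \<in> Sn n \<and> (x = y \<or> (fence_label n x \<in> S \<and>
      inversions n x - {(1, n)} = inversions n y - {(1, n)}))}"

lemma fence_label_eq:
  assumes "inversions n x - {(1, n)} = inversions n y - {(1, n)}"
  shows "fence_label n x = fence_label n y"
proof -
  have "(1, c) \<in> inversions n x \<longleftrightarrow> (1, c) \<in> inversions n y" if "c \<in> {2..n - 1}" for c
  proof -
    have "(1, c) \<noteq> (1, n)"
      using that by auto
    then show ?thesis
      using assms by blast
  qed
  then show ?thesis
    unfolding fence_label_def by blast
qed

lemma transitive_cotransitive_insert_extremes: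
  assumes tc: "transitive_cotransitive n I" and "1 < n"
    and split: "\<And>b. 1 < b \<Longrightarrow> b < n \<Longrightarrow> (1, b) \<in> I \<or> (b, n) \<in> I"
  shows "transitive_cotransitive n (insert (1, n) I)"
  unfolding transitive_cotransitive_def
proof (intro conjI allI impI)
  note P = transitive_cotransitive_pairsD[OF tc]
  show "insert (1, n) I \<subseteq> pairs n"
    using P \<open>1 < n\<close> unfolding pairs_def by auto
  fix a b c
  show "(a, c) \<in> insert (1, n) I"
    if ab: "(a, b) \<in> insert (1, n) I" and bc: "(b, c) \<in> insert (1, n) I"
  proof -
    have "(a, b) \<in> I"
    proof (rule ccontr)
      assume "(a, b) \<notin> I"
      then have "b = n" "(n, c) \<in> I"
        using ab bc \<open>1 < n\<close> by auto
      then show False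
        using P[of n c] by linarith
    qed
    moreover have "(b, c) \<in> I"
    proof (rule ccontr)
      assume "(b, c) \<notin> I"
      then have "b = 1"
        using bc by simp
      then show False
        using P[of a b] \<open>(a, b) \<in> I\<close> by auto
    qed
    ultimately show ?thesis
      using transitive_cotransitive_transD[OF tc] by blast
  qed
  show "(a, b) \<in> insert (1, n) I \<or> (b, c) \<in> insert (1, n) I"
    if "(a, c) \<in> insert (1, n) I" "a < b" "b < c"
    using that split[of b] transitive_cotransitive_cotransD[OF tc, of a c b] by blast
qed

lemma transitive_cotransitive_remove_extremes:
  assumes tc: "transitive_cotransitive n I"
    and no_mid: "\<And>b. (1, b) \<in> I \<Longrightarrow> (b, n) \<notin> I"
  shows "transitive_cotransitive n (I - {(1, n)})"
  unfolding transitive_cotransitive_def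
proof (intro conjI allI impI)
  note P = transitive_cotransitive_pairsD[OF tc]
  show "I - {(1, n)} \<subseteq> pairs n"
    using P unfolding pairs_def by auto
  fix a b c
  show "(a, c) \<in> I - {(1, n)}" if "(a, b) \<in> I - {(1, n)}" "(b, c) \<in> I - {(1, n)}"
  proof -
    have "(a, c) \<in> I"
      using that transitive_cotransitive_transD[OF tc] by blast
    moreover have "(a, c) \<noteq> (1, n)"
      using that no_mid[of b] by blast
    ultimately show ?thesis
      by blast
  qed
  show "(a, b) \<in> I - {(1, n)} \<or> (b, c) \<in> I - {(1, n)}"
    if "(a, c) \<in> I - {(1, n)}" "a < b" "b < c"
  proof -
    have "(a, c) \<in> I"
      using that by blast
    then have "1 \<le> a" "c \<le> n" "(a, b) \<in> I \<or> (b, c) \<in> I"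
      using P[of a c] transitive_cotransitive_cotransD[OF tc _ \<open>a < b\<close> \<open>b < c\<close>] by auto
    then show ?thesis
      using \<open>a < b\<close> \<open>b < c\<close> by auto
  qed
qed

lemma top_fence_edge_split:
  assumes y: "y \<in> Sn n" and xy: "inversions n y = insert (1, n) (inversions n x)"
    and "1 < b" "b < n"
  shows "(1, b) \<in> inversions n x \<or> (b, n) \<in> inversions n x"
  using transitive_cotransitive_cotransD[OF transitive_cotransitive_inversions[OF y], of 1 n b] assms
  by auto

text \<open>Joining with \<open>z\<close> preserves a contracted edge \<open>x \<lessdot> y\<close> of a top fence: if the join
  \<open>j\<close> of \<open>x\<close> and \<open>z\<close> does not invert \<open>(1, n)\<close>, then adding \<open>(1, n)\<close> to its inversion set gives
  the join of \<open>y\<close> and \<open>z\<close>.\<close>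

lemma top_fence_congruence_join:
  assumes x: "x \<in> Sn n" and y: "y \<in> Sn n"
    and xy: "inversions n y = insert (1, n) (inversions n x)" "(1, n) \<notin> inversions n x"
    and label: "fence_label n x \<in> S"
    and j: "is_join n x z j" and j': "is_join n y z j'"
  shows "(j, j') \<in> top_fence_congruence n S"
proof -
  have jS: "j \<in> Sn n" and x_j: "inversions n x \<subseteq> inversions n j" and z_j: "inversions n z \<subseteq> inversions n j"
    using is_joinD[OF j] by auto
  have j'S: "j' \<in> Sn n" and y_j': "inversions n y \<subseteq> inversions n j'"
    and z_j': "inversions n z \<subseteq> inversions n j'"
    using is_joinD[OF j'] by auto
  have j_j': "inversions n j \<subseteq> inversions n j'"
    using is_join_least[OF j j'S _ z_j'] y_j' xy(1) by blast
  show ?thesis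
  proof (cases "(1, n) \<in> inversions n j")
    case True
    then have "inversions n j' \<subseteq> inversions n j"
      using is_join_least[OF j' jS _ z_j] x_j xy(1) by auto
    then have "j = j'"
      using inversions_inject[OF jS j'S] j_j' by blast
    then show ?thesis
      unfolding top_fence_congruence_def using jS by simp
  next
    case False
    have tj: "transitive_cotransitive n (inversions n j)"
      using transitive_cotransitive_inversions[OF jS] .
    note split = top_fence_edge_split[OF y xy(1)]
    have "1 < n"
      using inversions_subset_pairs[OF y] xy(1) unfolding pairs_def by auto
    have "transitive_cotransitive n (insert (1, n) (inversions n j))"
      using split x_j by (intro transitive_cotransitive_insert_extremes[OF tj \<open>1 < n\<close>]) blast
    then obtain q where q: "q \<in> Sn n" "inversions n q = insert (1, n) (inversions n j)"
      using transitive_cotransitive_imp_inversions by blast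
    then have "inversions n j' \<subseteq> insert (1, n) (inversions n j)"
      using is_join_least[OF j' q(1)] x_j z_j xy(1) by auto
    then have same: "inversions n j - {(1, n)} = inversions n j' - {(1, n)}"
      using j_j' by blast
    have "(1, c) \<in> inversions n x" if "(1, c) \<in> inversions n j" "c \<in> {2..n - 1}" for c
    proof (rule ccontr)
      assume "(1, c) \<notin> inversions n x"
      then have "(c, n) \<in> inversions n j"
        using split[of c] that(2) x_j by auto
      then show False
        using transitive_cotransitive_transD[OF tj that(1)] False by blast
    qed
    then have "fence_label n j = fence_label n x"
      unfolding fence_label_def using x_j by blast
    then show ?thesis
      unfolding top_fence_congruence_def using jS j'S same label by simp
  qed
qed

text \<open>Dually, if the meet \<open>m'\<close> of \<open>y\<close> and \<open>z\<close> inverts \<open>(1, n)\<close>, removing it gives the meet of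
  \<open>x\<close> and \<open>z\<close>.\<close>

lemma top_fence_congruence_meet:
  assumes x: "x \<in> Sn n" and y: "y \<in> Sn n"
    and xy: "inversions n y = insert (1, n) (inversions n x)" "(1, n) \<notin> inversions n x"
    and label: "fence_label n x \<in> S"
    and m: "is_meet n x z m" and m': "is_meet n y z m'"
  shows "(m, m') \<in> top_fence_congruence n S"
proof -
  have mS: "m \<in> Sn n" and m_x: "inversions n m \<subseteq> inversions n x" and m_z: "inversions n m \<subseteq> inversions n z"
    using is_meetD[OF m] by auto
  have m'S: "m' \<in> Sn n" and m'_y: "inversions n m' \<subseteq> inversions n y"
    and m'_z: "inversions n m' \<subseteq> inversions n z"
    using is_meetD[OF m'] by auto
  have m_m': "inversions n m \<subseteq> inversions n m'"
    using is_meet_greatest[OF m' mS _ m_z] m_x xy(1) by blast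
  have y_x: "(a, b) \<in> inversions n x" if "(a, b) \<in> inversions n m'" "(a, b) \<noteq> (1, n)" for a b
    using that m'_y xy(1) by blast
  show ?thesis
  proof (cases "(1, n) \<in> inversions n m'")
    case False
    then have "inversions n m' \<subseteq> inversions n x"
      using y_x by auto
    then have "inversions n m' \<subseteq> inversions n m"
      using is_meet_greatest[OF m m'S _ m'_z] by blast
    then have "m = m'"
      using inversions_inject[OF mS m'S] m_m' by blast
    then show ?thesis
      unfolding top_fence_congruence_def using mS by simp
  next
    case True
    have tx: "transitive_cotransitive n (inversions n x)"
      and tm': "transitive_cotransitive n (inversions n m')"
      using transitive_cotransitive_inversions x m'S by blast+
    have no_mid: "(b, n) \<notin> inversions n m'" if "(1, b) \<in> inversions n m'" for b
    proof
      assume "(b, n) \<in> inversions n m'"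
      moreover have "1 < b" "b < n"
        using transitive_cotransitive_pairsD[OF tm' that]
          transitive_cotransitive_pairsD[OF tm' \<open>(b, n) \<in> inversions n m'\<close>] by auto
      ultimately have "(1, b) \<in> inversions n x" "(b, n) \<in> inversions n x"
        using that y_x by auto
      then show False
        using transitive_cotransitive_transD[OF tx] xy(2) by blast
    qed
    obtain q where q: "q \<in> Sn n" "inversions n q = inversions n m' - {(1, n)}"
      using transitive_cotransitive_imp_inversions[OF
          transitive_cotransitive_remove_extremes[OF tm' no_mid]] by blast
    moreover have "inversions n m' - {(1, n)} \<subseteq> inversions n x"
      using y_x by auto
    ultimately have "inversions n m' - {(1, n)} \<subseteq> inversions n m"
      using is_meet_greatest[OF m q(1)] m'_z by auto
    then have same: "inversions n m - {(1, n)} = inversions n m' - {(1, n)}"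
      using m_m' by blast
    have "(1, c) \<in> inversions n m'" if "(1, c) \<in> inversions n x" "c \<in> {2..n - 1}" for c
    proof (rule ccontr)
      assume "(1, c) \<notin> inversions n m'"
      then have "(c, n) \<in> inversions n x"
        using transitive_cotransitive_cotransD[OF tm' True, of c] that(2) y_x by auto
      then show False
        using transitive_cotransitive_transD[OF tx that(1)] xy(2) by blast
    qed
    then have "fence_label n m' = fence_label n x"
      unfolding fence_label_def using y_x by auto
    then have "fence_label n m = fence_label n x"
      using fence_label_eq[OF same] by simp
    then show ?thesis
      unfolding top_fence_congruence_def using mS m'S same label by simp
  qed
qed

lemma top_fence_congruence_sym: "(x, y) \<in> top_fence_congruence n S \<Longrightarrow> (y, x) \<in> top_fence_congruence n S"
proof -
  assume xy: "(x, y) \<in> top_fence_congruence n S"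
  have "fence_label n y \<in> S" if "fence_label n x \<in> S"
    "inversions n x - {(1, n)} = inversions n y - {(1, n)}"
    using that fence_label_eq by metis
  then show ?thesis
    using xy unfolding top_fence_congruence_def by auto
qed

lemma equiv_top_fence_congruence: "equiv (Sn n) (top_fence_congruence n S)"
proof (rule equivI)
  show "top_fence_congruence n S \<subseteq> Sn n \<times> Sn n" "refl_on (Sn n) (top_fence_congruence n S)"
    unfolding top_fence_congruence_def refl_on_def by auto
  show "sym (top_fence_congruence n S)"
    using top_fence_congruence_sym by (metis symI)
  show "trans (top_fence_congruence n S)"
    unfolding top_fence_congruence_def by (rule transI) (clarsimp, metis fence_label_eq)
qed

lemma top_fence_congruence_cases:
  assumes "(x, y) \<in> top_fence_congruence n S"
  obtains "x = y"
  | "inversions n y = insert (1, n) (inversions n x)" "(1, n) \<notin> inversions n x" "fence_label n x \<in> S"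
  | "inversions n x = insert (1, n) (inversions n y)" "(1, n) \<notin> inversions n y" "fence_label n y \<in> S"
proof (cases "x = y")
  case False
  have S: "x \<in> Sn n" "y \<in> Sn n"
    and label: "fence_label n x \<in> S" and same: "inversions n x - {(1, n)} = inversions n y - {(1, n)}"
    using assms False unfolding top_fence_congruence_def by auto
  have "inversions n x \<noteq> inversions n y"
    using inversions_inject[OF S] False by blast
  then consider "(1, n) \<notin> inversions n x" "inversions n y = insert (1, n) (inversions n x)"
    | "(1, n) \<notin> inversions n y" "inversions n x = insert (1, n) (inversions n y)"
    using same by blast
  then show thesis
    using that label fence_label_eq[OF same] by metis
qed

lemma lattice_congruence_top_fence_congruence: "lattice_congruence n (top_fence_congruence n S)"
  unfolding lattice_congruence_def
proof (intro conjI ballI impI allI equiv_top_fence_congruence)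
  fix x y z assume x: "x \<in> Sn n" and y: "y \<in> Sn n" and xy: "(x, y) \<in> top_fence_congruence n S"
  show "(j, j') \<in> top_fence_congruence n S" if "is_join n x z j \<and> is_join n y z j'" for j j'
    using xy
  proof (cases rule: top_fence_congruence_cases)
    case 1
    then show ?thesis
      using that is_join_unique equiv_top_fence_congruence[of n S]
      unfolding is_join_def equiv_def refl_on_def by metis
  next
    case 2
    then show ?thesis
      using top_fence_congruence_join[OF x y] that by blast
  next
    case 3
    then show ?thesis
      using top_fence_congruence_join[OF y x] top_fence_congruence_sym that by blast
  qed
  show "(m, m') \<in> top_fence_congruence n S" if "is_meet n x z m \<and> is_meet n y z m'" for m m'
    using xy
  proof (cases rule: top_fence_congruence_cases)
    case 1
    then show ?thesis
      using that is_meet_unique equiv_top_fence_congruence[of n S]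
      unfolding is_meet_def equiv_def refl_on_def by metis
  next
    case 2
    then show ?thesis
      using top_fence_congruence_meet[OF x y] that by blast
  next
    case 3
    then show ?thesis
      using top_fence_congruence_meet[OF y x] top_fence_congruence_sym that by blast
  qed
qed

lemma essential_top_fence_congruence:
  assumes "3 \<le> n"
  shows "essential n (top_fence_congruence n S)"
  unfolding essential_def
proof (intro allI impI)
  fix a assume a: "1 \<le> a \<and> a + 1 \<le> n"
  have edge: "(id, id \<circ> adj_swap a) \<in> fence_edges n a (a + 1) {}"
    unfolding fence_edges_def using a id_in_Sn by auto
  have "(a, a + 1) \<noteq> (1, n)"
    using a assms by auto
  then have "inversions n id - {(1, n)} \<noteq> inversions n (id \<circ> adj_swap a) - {(1, n)}"
    using inversions_id inversions_adj_swap a by auto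
  moreover have "(id \<circ> adj_swap a) a \<noteq> id a"
    by simp
  then have "id \<noteq> id \<circ> adj_swap a"
    by metis
  ultimately have "(id, id \<circ> adj_swap a) \<notin> top_fence_congruence n S"
    unfolding top_fence_congruence_def by auto
  then show "\<not> fence_in_FR n (top_fence_congruence n S) a (a + 1) {}"
    unfolding fence_in_FR_def using edge by blast
qed

lemma transitive_cotransitive_key:
  "transitive_cotransitive n {(a, b). 1 \<le> a \<and> a < b \<and> b \<le> n \<and> key b < (key a :: nat)}"
  unfolding transitive_cotransitive_def pairs_def by auto

text \<open>Every label \<open>L\<close> occurs: sort the values by the key below, which places the values of \<open>L\<close>,
  then \<open>1\<close>, then \<open>n\<close>, then the remaining values.\<close>

lemma exists_top_fence_edge:
  assumes "3 \<le> n" and L: "L \<subseteq> {2..n - 1}"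
  shows "\<exists>x\<in>Sn n. \<exists>y\<in>Sn n. inversions n y = insert (1, n) (inversions n x)
    \<and> (1, n) \<notin> inversions n x \<and> fence_label n x = L"
proof -
  define key where "key c = (if c = 1 then n + 1 else if c = n then n + 2 else if c \<in> L then c else 2 * n + c)" for c
  let ?I = "{(a, b). 1 \<le> a \<and> a < b \<and> b \<le> n \<and> key b < key a}"
  obtain x where x: "x \<in> Sn n" "inversions n x = ?I"
    using transitive_cotransitive_imp_inversions[OF transitive_cotransitive_key] by blast
  have L_less: "c < n" if "c \<in> L" for c
    using subsetD[OF L that] \<open>3 \<le> n\<close> by auto
  have not_1n: "(1, n) \<notin> inversions n x"
    unfolding x(2) key_def by simp
  have "(1, b) \<in> inversions n x \<or> (b, n) \<in> inversions n x" if "1 < b" "b < n" for b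
    using that unfolding x(2) key_def by auto
  then have "transitive_cotransitive n (insert (1, n) (inversions n x))"
    using transitive_cotransitive_insert_extremes[OF transitive_cotransitive_inversions[OF x(1)]] \<open>3 \<le> n\<close>
    by simp
  then obtain y where y: "y \<in> Sn n" "inversions n y = insert (1, n) (inversions n x)"
    using transitive_cotransitive_imp_inversions by blast
  have "(1, c) \<in> inversions n x \<longleftrightarrow> c \<in> L" if "c \<in> {2..n - 1}" for c
    using that L_less unfolding x(2) key_def by auto
  then have "fence_label n x = L"
    unfolding fence_label_def using L by blast
  then show ?thesis
    using x(1) y not_1n by blast
qed

lemma inj_on_top_fence_congruence:
  assumes "3 \<le> n"
  shows "inj_on (top_fence_congruence n) (Pow (Pow {2..n - 1}))"
proof (rule inj_onI)
  fix S S' assume S: "S \<in> Pow (Pow {2..n - 1})" and S': "S' \<in> Pow (Pow {2..n - 1})"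
    and eq: "top_fence_congruence n S = top_fence_congruence n S'"
  have "L \<in> S \<longleftrightarrow> L \<in> S'" if L: "L \<subseteq> {2..n - 1}" for L
  proof -
    obtain x y where x: "x \<in> Sn n" and y: "y \<in> Sn n"
      and xy: "inversions n y = insert (1, n) (inversions n x)" "(1, n) \<notin> inversions n x"
      and label: "fence_label n x = L"
      using exists_top_fence_edge[OF assms L] by blast
    have "x \<noteq> y"
      using xy by auto
    moreover have "inversions n x - {(1, n)} = inversions n y - {(1, n)}"
      using xy by auto
    ultimately have mem: "(x, y) \<in> top_fence_congruence n T \<longleftrightarrow> L \<in> T" for T
      unfolding top_fence_congruence_def using x y label by auto
    show ?thesis
      using mem[of S] mem[of S'] eq by simp
  qed
  then show "S = S'"
    using S S' by (intro set_eqI) auto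
qed

lemma card_essential_congruences_ge:
  assumes "3 \<le> n"
  shows "2 ^ 2 ^ (n - 2) \<le> card (essential_congruences n)"
proof -
  have "finite (essential_congruences n)"
  proof (rule finite_subset)
    have "R \<subseteq> Sn n \<times> Sn n" if "lattice_congruence n R" for R
      using that equiv_type unfolding lattice_congruence_def by auto
    then show "essential_congruences n \<subseteq> Pow (Sn n \<times> Sn n)"
      unfolding essential_congruences_def by auto
    show "finite (Pow (Sn n \<times> Sn n))"
      using finite_Sn by simp
  qed
  moreover have "top_fence_congruence n ` Pow (Pow {2..n - 1}) \<subseteq> essential_congruences n"
    unfolding essential_congruences_def
    using lattice_congruence_top_fence_congruence essential_top_fence_congruence[OF assms] by blast
  ultimately have "card (top_fence_congruence n ` Pow (Pow {2..n - 1})) \<le> card (essential_congruences n)"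
    by (rule card_mono)
  moreover have "card (Pow (Pow {2..n - 1})) = 2 ^ 2 ^ (n - 2)"
    using assms by (simp add: card_Pow)
  ultimately show ?thesis
    using card_image[OF inj_on_top_fence_congruence[OF assms]] by simp
qed

section \<open>A lattice congruence is determined by the join-irreducibles it contracts\<close>

text \<open>The join-irreducible permutations are those with a single descent \<open>k\<close>; the unique element
  they cover is \<open>j \<circ> adj_swap k\<close>.\<close>

definition unique_descent :: "nat \<Rightarrow> (nat \<Rightarrow> nat) \<Rightarrow> nat \<Rightarrow> bool" where
  "unique_descent n j k \<longleftrightarrow> j \<in> Sn n \<and> descent n j k \<and> (\<forall>k'. descent n j k' \<longrightarrow> k' = k)"

definition contracted_join_irreducibles ::
    "nat \<Rightarrow> ((nat \<Rightarrow> nat) \<times> (nat \<Rightarrow> nat)) set \<Rightarrow> (nat \<Rightarrow> nat) set" where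
  "contracted_join_irreducibles n R = {j. \<exists>k. unique_descent n j k \<and> (j \<circ> adj_swap k, j) \<in> R}"

lemma lattice_congruence_join:
  "lattice_congruence n R \<Longrightarrow> x \<in> Sn n \<Longrightarrow> y \<in> Sn n \<Longrightarrow> z \<in> Sn n \<Longrightarrow> (x, y) \<in> R
    \<Longrightarrow> is_join n x z j \<Longrightarrow> is_join n y z j' \<Longrightarrow> (j, j') \<in> R"
  unfolding lattice_congruence_def by blast

lemma lattice_congruence_meet:
  "lattice_congruence n R \<Longrightarrow> x \<in> Sn n \<Longrightarrow> y \<in> Sn n \<Longrightarrow> z \<in> Sn n \<Longrightarrow> (x, y) \<in> R
    \<Longrightarrow> is_meet n x z m \<Longrightarrow> is_meet n y z m' \<Longrightarrow> (m, m') \<in> R"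
  unfolding lattice_congruence_def by blast

lemma lattice_congruence_equiv: "lattice_congruence n R \<Longrightarrow> equiv (Sn n) R"
  unfolding lattice_congruence_def by blast

lemma lattice_congruence_refl: "lattice_congruence n R \<Longrightarrow> x \<in> Sn n \<Longrightarrow> (x, x) \<in> R"
  using lattice_congruence_equiv unfolding equiv_def refl_on_def by blast

lemma lattice_congruence_sym: "lattice_congruence n R \<Longrightarrow> (x, y) \<in> R \<Longrightarrow> (y, x) \<in> R"
  using lattice_congruence_equiv unfolding equiv_def by (meson symD)

lemma lattice_congruence_trans: "lattice_congruence n R \<Longrightarrow> (x, y) \<in> R \<Longrightarrow> (y, z) \<in> R \<Longrightarrow> (x, z) \<in> R"
  using lattice_congruence_equiv unfolding equiv_def by (meson transD)

lemma lattice_congruence_in_Sn: "lattice_congruence n R \<Longrightarrow> (x, y) \<in> R \<Longrightarrow> x \<in> Sn n \<and> y \<in> Sn n"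
  using lattice_congruence_equiv equiv_type by blast

lemma lattice_congruence_interval:
  assumes R: "lattice_congruence n R" and u: "u \<in> Sn n" and v: "v \<in> Sn n" and w: "w \<in> Sn n"
    and "inversions n u \<subseteq> inversions n w" "inversions n w \<subseteq> inversions n v" and "(u, v) \<in> R"
  shows "(w, v) \<in> R"
  using lattice_congruence_join[OF R u v w \<open>(u, v) \<in> R\<close> is_join_of_le[OF u w] is_join_of_ge[OF v w]] assms(5,6) .

text \<open>Take such a \<open>j\<close> with the fewest inversions.\<close>

lemma exists_minimal_not_below:
  assumes u: "u \<in> Sn n" and v: "v \<in> Sn n" and ne: "\<not> inversions n v \<subseteq> inversions n u"
  shows "\<exists>j\<in>Sn n. inversions n j \<subseteq> inversions n v \<and> \<not> inversions n j \<subseteq> inversions n u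
    \<and> (\<forall>k. descent n j k \<longrightarrow> inversions n (j \<circ> adj_swap k) \<subseteq> inversions n u)"
proof -
  define W where "W = {w \<in> Sn n. inversions n w \<subseteq> inversions n v \<and> \<not> inversions n w \<subseteq> inversions n u}"
  have "v \<in> W"
    unfolding W_def using v ne by auto
  then obtain j where "j \<in> W" and min: "\<And>w. w \<in> W \<Longrightarrow> card (inversions n j) \<le> card (inversions n w)"
    using ex_has_least_nat[of "\<lambda>w. w \<in> W" v "\<lambda>w. card (inversions n w)"] by blast
  then have j: "j \<in> Sn n" and j_v: "inversions n j \<subseteq> inversions n v"
    and j_u: "\<not> inversions n j \<subseteq> inversions n u"
    unfolding W_def by auto
  have "inversions n (j \<circ> adj_swap k) \<subseteq> inversions n u" if dk: "descent n j k" for k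
  proof -
    have k: "1 \<le> k" "k + 1 \<le> n"
      using dk unfolding descent_def by auto
    have "card (inversions n (j \<circ> adj_swap k)) < card (inversions n j)"
      unfolding inversions_comp_adj_swap_descent[OF j dk]
      using descent_pair_mem_inversions[OF j dk] finite_inversions by (meson card_Diff1_less)
    then have "j \<circ> adj_swap k \<notin> W"
      using min by fastforce
    then show ?thesis
      unfolding W_def using comp_adj_swap_in_Sn[OF j k] j_v inversions_comp_adj_swap_descent[OF j dk]
      by blast
  qed
  then show ?thesis
    using j j_v j_u by blast
qed

text \<open>Below a cover \<open>u \<lessdot> v\<close> sits a join-irreducible \<open>j\<close> with \<open>j \<le> v\<close>, \<open>j \<not>\<le> u\<close> and
  \<open>j\<^sub>* \<le> u\<close>: two descents of the minimal \<open>j\<close> above would put \<open>j\<close> itself below \<open>u\<close>.\<close>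

lemma exists_join_irreducible_below_cover:
  assumes u: "u \<in> Sn n" and i: "1 \<le> i" "i + 1 \<le> n" and asc: "u i < u (i + 1)"
  shows "\<exists>j k. unique_descent n j k \<and> (j (k + 1), j k) = (u i, u (i + 1))
    \<and> inversions n (j \<circ> adj_swap k) \<subseteq> inversions n u"
proof -
  define p where "p = (u i, u (i + 1))"
  have inv_v: "inversions n (u \<circ> adj_swap i) = insert p (inversions n u)"
    unfolding p_def using inversions_comp_adj_swap_ascent[OF u i asc] .
  have p_u: "p \<notin> inversions n u"
    unfolding p_def using mem_inversions_iff[OF u] Sn_inv_apply[OF u] by simp
  obtain j where j: "j \<in> Sn n" and j_v: "inversions n j \<subseteq> insert p (inversions n u)"
    and j_u: "\<not> inversions n j \<subseteq> inversions n u"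
    and below: "\<And>k. descent n j k \<Longrightarrow> inversions n (j \<circ> adj_swap k) \<subseteq> inversions n u"
    using exists_minimal_not_below[OF u comp_adj_swap_in_Sn[OF u i]] inv_v p_u by auto
  have p_j: "p \<in> inversions n j"
    using j_v j_u by blast
  obtain k where dk: "descent n j k"
    using exists_descent[OF j] p_j by blast
  have unique: "k' = k" if dk': "descent n j k'" for k'
  proof (rule ccontr)
    assume "k' \<noteq> k"
    then have "(j (k + 1), j k) \<noteq> (j (k' + 1), j k')"
      using Sn_inj[OF j, of k k'] by auto
    then have "inversions n j \<subseteq> inversions n (j \<circ> adj_swap k) \<union> inversions n (j \<circ> adj_swap k')"
      unfolding inversions_comp_adj_swap_descent[OF j dk] inversions_comp_adj_swap_descent[OF j dk']
      by blast
    then show False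
      using below[OF dk] below[OF dk'] j_u by blast
  qed
  have "(j (k + 1), j k) \<notin> inversions n u"
    using below[OF dk] j_u unfolding inversions_comp_adj_swap_descent[OF j dk] by blast
  then have "(j (k + 1), j k) = p"
    using descent_pair_mem_inversions[OF j dk] j_v by blast
  then show ?thesis
    unfolding unique_descent_def p_def using j dk unique below[OF dk] by blast
qed

text \<open>The join-irreducible \<open>j\<close> below the cover \<open>u \<lessdot> v\<close> is perspective to it: \<open>u \<and> j = j\<^sub>*\<close>,
  \<open>v \<and> j = j\<close>, \<open>j\<^sub>* \<or> u = u\<close> and \<open>j \<or> u = v\<close>. So the cover is contracted iff \<open>j\<^sub>* \<lessdot> j\<close> is.\<close>

lemma contracted_cover_transfer:
  assumes R: "lattice_congruence n R" and R': "lattice_congruence n R'"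
    and contr: "contracted_join_irreducibles n R \<subseteq> contracted_join_irreducibles n R'"
    and u: "u \<in> Sn n" and i: "1 \<le> i" "i + 1 \<le> n" and asc: "u i < u (i + 1)"
    and uv: "(u, u \<circ> adj_swap i) \<in> R"
  shows "(u, u \<circ> adj_swap i) \<in> R'"
proof -
  define v where "v = u \<circ> adj_swap i"
  define p where "p = (u i, u (i + 1))"
  obtain j k where jk: "unique_descent n j k" and jp: "(j (k + 1), j k) = p"
    and below: "inversions n (j \<circ> adj_swap k) \<subseteq> inversions n u"
    using exists_join_irreducible_below_cover[OF u i asc] unfolding p_def by blast
  have j: "j \<in> Sn n" and dk: "descent n j k"
    using jk unfolding unique_descent_def by auto
  have k: "1 \<le> k" "k + 1 \<le> n"
    using dk unfolding descent_def by auto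
  define j' where "j' = j \<circ> adj_swap k"
  have j': "j' \<in> Sn n" and v: "v \<in> Sn n"
    unfolding j'_def v_def using comp_adj_swap_in_Sn j u k i by blast+
  have inv_j: "inversions n j = insert p (inversions n j')"
    unfolding j'_def inversions_comp_adj_swap_descent[OF j dk] jp[symmetric]
    using descent_pair_mem_inversions[OF j dk] by blast
  have inv_v: "inversions n v = insert p (inversions n u)"
    unfolding v_def p_def using inversions_comp_adj_swap_ascent[OF u i asc] .
  have p_u: "p \<notin> inversions n u"
    unfolding p_def using mem_inversions_iff[OF u] Sn_inv_apply[OF u] by simp
  have below': "inversions n j' \<subseteq> inversions n u"
    unfolding j'_def using below .
  have meet_u: "is_meet n u j j'"
    unfolding is_meet_def weak_le_def using j' below' inv_j p_u by auto
  have meet_v: "is_meet n v j j"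
    unfolding is_meet_def weak_le_def using j below' inv_j inv_v by auto
  have join_u: "is_join n j' u u"
    using is_join_of_le[OF j' u below'] .
  have join_v: "is_join n j u v"
    unfolding is_join_def weak_le_def using v below' inv_j inv_v by auto
  have "(j', j) \<in> R"
    using lattice_congruence_meet[OF R u v j uv[folded v_def] meet_u meet_v] .
  then have "j \<in> contracted_join_irreducibles n R'"
    using contr jk unfolding contracted_join_irreducibles_def j'_def by blast
  then have "(j', j) \<in> R'"
    using jk unfolding contracted_join_irreducibles_def unique_descent_def j'_def by blast
  then show ?thesis
    using lattice_congruence_join[OF R' j' j u _ join_u join_v] unfolding v_def by blast
qed

text \<open>Hence comparable congruent pairs transfer: walk up from \<open>u\<close> to \<open>v\<close> along covers, each of
  which is contracted because it lies in the contracted interval \<open>[u, v]\<close>.\<close>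

lemma contracted_comparable_transfer:
  assumes R: "lattice_congruence n R" and R': "lattice_congruence n R'"
    and contr: "contracted_join_irreducibles n R \<subseteq> contracted_join_irreducibles n R'"
  shows "u \<in> Sn n \<Longrightarrow> v \<in> Sn n \<Longrightarrow> inversions n u \<subseteq> inversions n v \<Longrightarrow> (u, v) \<in> R \<Longrightarrow> (u, v) \<in> R'"
proof (induction "card (inversions n v - inversions n u)" arbitrary: u rule: less_induct)
  case less
  note u = \<open>u \<in> Sn n\<close> and v = \<open>v \<in> Sn n\<close> and uv = \<open>inversions n u \<subseteq> inversions n v\<close>
    and R_uv = \<open>(u, v) \<in> R\<close>
  show ?case
  proof (cases "inversions n u = inversions n v")
    case True
    then show ?thesis
      using inversions_inject[OF u v] lattice_congruence_refl[OF R' v] by simp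
  next
    case False
    obtain i where i: "1 \<le> i" "i + 1 \<le> n" "u i < u (i + 1)"
      and p_v: "(u i, u (i + 1)) \<in> inversions n v"
      using exists_ascent_inverted[OF u v uv False] by blast
    define w where "w = u \<circ> adj_swap i"
    have w: "w \<in> Sn n"
      unfolding w_def using comp_adj_swap_in_Sn u i by blast
    have inv_w: "inversions n w = insert (u i, u (i + 1)) (inversions n u)"
      unfolding w_def using inversions_comp_adj_swap_ascent u i by blast
    have p_u: "(u i, u (i + 1)) \<notin> inversions n u"
      using mem_inversions_iff[OF u] Sn_inv_apply[OF u] by simp
    have uw: "inversions n u \<subseteq> inversions n w" and wv: "inversions n w \<subseteq> inversions n v"
      unfolding inv_w using p_v uv by auto
    have R_wv: "(w, v) \<in> R"
      using lattice_congruence_interval[OF R u v w uw wv R_uv] .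
    have "(u, w) \<in> R"
      using lattice_congruence_trans[OF R R_uv lattice_congruence_sym[OF R R_wv]] .
    then have R'_uw: "(u, w) \<in> R'"
      using contracted_cover_transfer[OF R R' contr u i] unfolding w_def by blast
    have "card (inversions n v - inversions n w) < card (inversions n v - inversions n u)"
      by (rule psubset_card_mono) (use finite_inversions p_v p_u uv in \<open>auto simp: inv_w\<close>)
    then have "(w, v) \<in> R'"
      using less.hyps w v wv R_wv by blast
    then show ?thesis
      using lattice_congruence_trans[OF R' R'_uw] by blast
  qed
qed

text \<open>An arbitrary congruent pair \<open>(x, y)\<close> reduces to the comparable pair
  \<open>x \<and> y \<le> x \<or> y\<close>, which is congruent as well.\<close>

lemma lattice_congruence_subset_of_contracted:
  assumes R: "lattice_congruence n R" and R': "lattice_congruence n R'"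
    and contr: "contracted_join_irreducibles n R \<subseteq> contracted_join_irreducibles n R'"
  shows "R \<subseteq> R'"
proof clarify
  fix x y assume xy: "(x, y) \<in> R"
  have x: "x \<in> Sn n" and y: "y \<in> Sn n"
    using lattice_congruence_in_Sn[OF R xy] by auto
  obtain m where m: "is_meet n y x m"
    using exists_is_meet[OF y x] by blast
  obtain j where j: "is_join n x y j"
    using exists_is_join[OF x y] by blast
  have mS: "m \<in> Sn n" and m_le: "inversions n m \<subseteq> inversions n x" "inversions n m \<subseteq> inversions n y"
    using is_meetD[OF m] by auto
  have jS: "j \<in> Sn n" and j_ge: "inversions n x \<subseteq> inversions n j" "inversions n y \<subseteq> inversions n j"
    using is_joinD[OF j] by auto
  have "(x, m) \<in> R"
    using lattice_congruence_meet[OF R x y x xy is_meet_self[OF x] m] .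
  moreover have "(j, y) \<in> R"
    using lattice_congruence_join[OF R x y y xy j is_join_self[OF y]] .
  ultimately have "(m, j) \<in> R"
    using xy lattice_congruence_trans[OF R] lattice_congruence_sym[OF R] by metis
  then have R'_mj: "(m, j) \<in> R'"
    using contracted_comparable_transfer[OF R R' contr mS jS] m_le j_ge by blast
  have "(x, j) \<in> R'" "(y, j) \<in> R'"
    using lattice_congruence_interval[OF R' mS jS x m_le(1) j_ge(1) R'_mj]
      lattice_congruence_interval[OF R' mS jS y m_le(2) j_ge(2) R'_mj] .
  then show "(x, y) \<in> R'"
    using lattice_congruence_trans[OF R'] lattice_congruence_sym[OF R'] by metis
qed

section \<open>Upper bound: counting join-irreducibles\<close>

lemma unique_descent_adj_swap:
  assumes a: "1 \<le> a" "a + 1 \<le> n"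
  shows "unique_descent n (adj_swap a) a"
  unfolding unique_descent_def
proof (intro conjI allI impI)
  show "adj_swap a \<in> Sn n"
    using adj_swap_in_Sn[OF a] .
  show "descent n (adj_swap a) a"
    unfolding descent_def using a by simp
  fix k assume "descent n (adj_swap a) k"
  then have "adj_swap a (k + 1) < adj_swap a k"
    unfolding descent_def by blast
  then show "k = a"
    by (cases "k + 1 = a"; cases "k = a + 1"; cases "k = a") simp_all
qed

text \<open>An essential congruence contracts no atom \<open>adj_swap a\<close>: contracting \<open>id \<lessdot> adj_swap a\<close>
  would contract the whole fence \<open>f(a, a + 1, {})\<close>, whose edges are its joins with permutations
  having \<open>a\<close> immediately before \<open>a + 1\<close>.\<close>

lemma adj_swap_not_contracted:
  assumes R: "lattice_congruence n R" and ess: "essential n R" and a: "1 \<le> a" "a + 1 \<le> n"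
  shows "adj_swap a \<notin> contracted_join_irreducibles n R"
proof
  assume "adj_swap a \<in> contracted_join_irreducibles n R"
  then obtain k where "unique_descent n (adj_swap a) k" "(adj_swap a \<circ> adj_swap k, adj_swap a) \<in> R"
    unfolding contracted_join_irreducibles_def by blast
  then have id_a: "(id, adj_swap a) \<in> R"
    using unique_descent_adj_swap[OF a] unfolding unique_descent_def by auto
  have "(u, v) \<in> R" if "(u, v) \<in> fence_edges n a (a + 1) {}" for u v
  proof -
    have "u \<in> Sn n \<and> (\<exists>i. 1 \<le> i \<and> i + 1 \<le> n \<and> u i = a \<and> u (i + 1) = a + 1 \<and> v = u \<circ> adj_swap i)"
      using that unfolding fence_edges_def by simp
    then obtain i where u: "u \<in> Sn n" and i: "1 \<le> i" "i + 1 \<le> n"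
      and ui: "u i = a" "u (i + 1) = a + 1" and v: "v = u \<circ> adj_swap i"
      by blast
    have inv_v: "inversions n v = insert (a, a + 1) (inversions n u)"
      unfolding v using inversions_comp_adj_swap_ascent[OF u i] ui by simp
    have "is_join n (adj_swap a) u v"
      unfolding is_join_def weak_le_def inv_v inversions_adj_swap[OF a]
      using comp_adj_swap_in_Sn[OF u i] v by blast
    then show ?thesis
      using lattice_congruence_join[OF R id_in_Sn adj_swap_in_Sn[OF a] u id_a]
        is_join_of_le[OF id_in_Sn u] inversions_id by simp
  qed
  then show False
    using ess a unfolding essential_def fence_in_FR_def by blast
qed

definition descent_prefix :: "nat \<Rightarrow> (nat \<Rightarrow> nat) \<Rightarrow> nat set" where
  "descent_prefix n j = j ` {1..THE k. descent n j k}"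

lemma descent_prefix_eq: "unique_descent n j k \<Longrightarrow> descent_prefix n j = j ` {1..k}"
  unfolding descent_prefix_def unique_descent_def by (metis the_equality)

lemma unique_descent_less:
  assumes jk: "unique_descent n j k" and "1 \<le> p" "p < q" "q \<le> n" and block: "q \<le> k \<or> k < p"
  shows "j p < j q"
proof -
  have j: "j \<in> Sn n"
    using jk unfolding unique_descent_def by blast
  have "j r < j (r + 1)" if "p \<le> r" "r < q" for r
  proof -
    have "r \<noteq> k"
      using that block by auto
    then have "\<not> descent n j r"
      using jk unfolding unique_descent_def by blast
    then have "\<not> j (r + 1) < j r"
      using that assms(2,4) unfolding descent_def by simp
    moreover have "j (r + 1) \<noteq> j r"
      using Sn_inj[OF j, of "r + 1" r] by auto
    ultimately show ?thesis
      by simp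
  qed
  then show ?thesis
    using less_of_ascents \<open>p < q\<close> by blast
qed

lemma inversions_unique_descent:
  assumes jk: "unique_descent n j k"
  shows "inversions n j = {(a, b) \<in> pairs n. b \<in> j ` {1..k} \<and> a \<notin> j ` {1..k}}"
proof -
  have j: "j \<in> Sn n" and k: "k + 1 \<le> n"
    using jk unfolding unique_descent_def descent_def by auto
  have prefix: "c \<in> j ` {1..k} \<longleftrightarrow> inv j c \<le> k" if "c \<in> {1..n}" for c
    using Sn_inv_apply[OF j] Sn_apply_inv[OF j, of c] Sn_inv_in[OF j that]
    by (metis atLeastAtMost_iff image_iff)
  have "inv j b < inv j a \<longleftrightarrow> inv j b \<le> k \<and> \<not> inv j a \<le> k" if ab: "(a, b) \<in> pairs n" for a b
  proof
    assume lt: "inv j b < inv j a"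
    have "inv j b \<in> {1..n}" "inv j a \<in> {1..n}"
      using ab Sn_inv_in[OF j] unfolding pairs_def by auto
    then have "\<not> (inv j a \<le> k \<or> k < inv j b) \<or> j (inv j b) < j (inv j a)"
      using unique_descent_less[OF jk, of "inv j b" "inv j a"] lt by auto
    then show "inv j b \<le> k \<and> \<not> inv j a \<le> k"
      using Sn_apply_inv[OF j] ab unfolding pairs_def by auto
  qed auto
  then have "(a, b) \<in> inversions n j \<longleftrightarrow> (a, b) \<in> pairs n \<and> b \<in> j ` {1..k} \<and> a \<notin> j ` {1..k}" for a b
    using prefix[of a] prefix[of b] mem_inversions_iff[OF j, of a b] unfolding pairs_def by auto
  then show ?thesis
    by auto
qed

lemma inj_on_descent_prefix: "inj_on (descent_prefix n) {j. \<exists>k. unique_descent n j k}"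
proof (rule inj_onI, clarify)
  fix j j' k k' assume jk: "unique_descent n j k" and jk': "unique_descent n j' k'"
    and eq: "descent_prefix n j = descent_prefix n j'"
  have "inversions n j = inversions n j'"
    using eq unfolding inversions_unique_descent[OF jk] inversions_unique_descent[OF jk']
      descent_prefix_eq[OF jk] descent_prefix_eq[OF jk'] by simp
  then show "j = j'"
    using inversions_inject jk jk' unfolding unique_descent_def by blast
qed

lemma descent_prefix_subset:
  assumes jk: "unique_descent n j k"
  shows "descent_prefix n j \<subseteq> {1..n}"
  using jk Sn_in unfolding descent_prefix_eq[OF jk] unique_descent_def descent_def by fastforce

lemma descent_prefix_ne_initial_segment:
  assumes jk: "unique_descent n j k"
  shows "descent_prefix n j \<noteq> {1..m}"
proof
  assume eq: "descent_prefix n j = {1..m}"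
  have j: "j \<in> Sn n" and k: "1 \<le> k" "k + 1 \<le> n" "j (k + 1) < j k"
    using jk unfolding unique_descent_def descent_def by auto
  have "card (j ` {1..k}) = k"
    using card_image[OF permutes_inj_on[OF Sn_permutes[OF j]]] by simp
  then have "m = k"
    using eq descent_prefix_eq[OF jk] by simp
  then have "j k \<le> k"
    using eq descent_prefix_eq[OF jk] k by auto
  moreover have "j (k + 1) \<notin> j ` {1..k}"
    using Sn_inj[OF j, of "k + 1"] by fastforce
  then have "k < j (k + 1)"
    using eq descent_prefix_eq[OF jk] \<open>m = k\<close> Sn_in[OF j, of "k + 1"] k by auto
  ultimately show False
    using k by simp
qed

lemma card_join_irreducibles:
  "card {j. \<exists>k. unique_descent n j k} \<le> 2 ^ n - (n + 1)"
proof -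
  let ?J = "{j. \<exists>k. unique_descent n j k}" and ?segments = "(\<lambda>m. {1..m}) ` {0..n}"
  have "descent_prefix n ` ?J \<subseteq> Pow {1..n} - ?segments"
  proof (rule image_subsetI)
    fix j assume "j \<in> ?J"
    then obtain k where "unique_descent n j k"
      by blast
    then show "descent_prefix n j \<in> Pow {1..n} - ?segments"
      using descent_prefix_subset descent_prefix_ne_initial_segment by blast
  qed
  then have "card (descent_prefix n ` ?J) \<le> card (Pow {1..n} - ?segments)"
    by (rule card_mono[rotated]) simp
  moreover have "card (descent_prefix n ` ?J) = card ?J"
    using card_image[OF inj_on_descent_prefix] .
  moreover have "inj_on (\<lambda>m. {1..m :: nat}) {0..n}"
  proof (rule inj_onI)
    fix m m' :: nat assume eq: "{1..m} = {1..m'}"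
    have "card {1..m} = card {1..m'}"
      by (simp only: eq)
    then show "m = m'"
      by simp
  qed
  then have "card ?segments = n + 1"
    by (simp add: card_image)
  moreover have "?segments \<subseteq> Pow {1..n}"
    by auto
  then have "card (Pow {1..n} - ?segments) = 2 ^ n - card ?segments"
    by (simp add: card_Diff_subset card_Pow)
  ultimately show ?thesis
    by simp
qed

lemma inj_on_adj_swap: "inj_on adj_swap {1..n - 1}"
proof (rule inj_onI, rule ccontr)
  fix a b :: nat assume "adj_swap a = adj_swap b" "a \<noteq> b"
  then have "adj_swap b a = a + 1"
    by (metis transpose_apply_first)
  with \<open>a \<noteq> b\<close> show False
    by (cases "a = b + 1") simp_all
qed

lemma card_join_irreducibles_diff_atoms:
  assumes "3 \<le> n"
  shows "card ({j. \<exists>k. unique_descent n j k} - adj_swap ` {1..n - 1}) \<le> 2 ^ n - 2 * n"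
proof -
  let ?J = "{j. \<exists>k. unique_descent n j k}" and ?A = "adj_swap ` {1..n - 1}"
  have "?A \<subseteq> ?J"
  proof (rule image_subsetI)
    fix a assume "a \<in> {1..n - 1}"
    then have "unique_descent n (adj_swap a) a"
      by (intro unique_descent_adj_swap) auto
    then show "adj_swap a \<in> ?J"
      by blast
  qed
  moreover have "finite ?A"
    by simp
  ultimately have "card (?J - ?A) = card ?J - (n - 1)"
    using card_image[OF inj_on_adj_swap] by (simp add: card_Diff_subset)
  then show ?thesis
    using card_join_irreducibles[of n] assms by simp
qed

lemma inj_on_contracted_join_irreducibles:
  "inj_on (contracted_join_irreducibles n) {R. lattice_congruence n R}"
proof (rule inj_onI)
  fix R R' assume "R \<in> {R. lattice_congruence n R}" "R' \<in> {R. lattice_congruence n R}"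
    and eq: "contracted_join_irreducibles n R = contracted_join_irreducibles n R'"
  then have "R \<subseteq> R'" "R' \<subseteq> R"
    using lattice_congruence_subset_of_contracted[of n R R'] lattice_congruence_subset_of_contracted[of n R' R]
    by auto
  then show "R = R'"
    by (rule equalityI)
qed

text \<open>The descent prefixes avoid the \<open>n + 1\<close> initial segments, and an essential congruence
  contracts none of the \<open>n - 1\<close> atoms \<open>adj_swap a\<close>; hence the exponent \<open>2 ^ n - 2 * n\<close>.\<close>

lemma card_essential_congruences_le:
  assumes "3 \<le> n"
  shows "card (essential_congruences n) \<le> 2 ^ (2 ^ n - 2 * n)"
proof -
  let ?J = "{j. \<exists>k. unique_descent n j k}" and ?A = "adj_swap ` {1..n - 1}"
  have "?J \<subseteq> Sn n"
    unfolding unique_descent_def by blast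
  then have fin: "finite (?J - ?A)"
    using finite_subset[OF _ finite_Sn] by blast
  have "essential_congruences n \<subseteq> {R. lattice_congruence n R}"
    unfolding essential_congruences_def by blast
  then have "inj_on (contracted_join_irreducibles n) (essential_congruences n)"
    by (rule inj_on_subset[OF inj_on_contracted_join_irreducibles])
  moreover have "contracted_join_irreducibles n ` essential_congruences n \<subseteq> Pow (?J - ?A)"
  proof (rule image_subsetI)
    fix R assume "R \<in> essential_congruences n"
    then have "adj_swap a \<notin> contracted_join_irreducibles n R" if "a \<in> {1..n - 1}" for a
      using adj_swap_not_contracted that unfolding essential_congruences_def by auto
    then show "contracted_join_irreducibles n R \<in> Pow (?J - ?A)"
      unfolding contracted_join_irreducibles_def by blast
  qed
  ultimately have "card (essential_congruences n) \<le> card (Pow (?J - ?A))"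
    using fin by (intro card_inj_on_le) auto
  also have "\<dots> = 2 ^ card (?J - ?A)"
    using fin by (rule card_Pow)
  also have "\<dots> \<le> 2 ^ (2 ^ n - 2 * n)"
    using card_join_irreducibles_diff_atoms[OF assms] by (simp add: power_increasing)
  finally show ?thesis .
qed

section \<open>Quotient graphs\<close>

lemma equiv_eq_of_quotient_eq:
  assumes r: "equiv A r" and s: "equiv A s" and eq: "A // r = A // s"
  shows "r = s"
proof -
  have "r \<subseteq> s" if r: "equiv A r" and s: "equiv A s" and eq: "A // r = A // s" for r s
  proof clarify
    fix x y assume xy: "(x, y) \<in> r"
    then have "x \<in> A"
      using r equiv_type by blast
    then have "r `` {x} \<in> A // s"
      using eq quotientI by metis
    moreover have "{x, y} \<subseteq> r `` {x}"
      using equiv_class_self[OF r \<open>x \<in> A\<close>] xy by auto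
    ultimately show "(x, y) \<in> s"
      using in_quotient_imp_in_rel[OF s] by blast
  qed
  then show ?thesis
    using r s eq by blast
qed

lemma inj_on_quotient_graph: "inj_on (quotient_graph n) (essential_congruences n)"
proof (rule inj_onI)
  fix R R' assume "R \<in> essential_congruences n" "R' \<in> essential_congruences n"
    and eq: "quotient_graph n R = quotient_graph n R'"
  then have "equiv (Sn n) R" "equiv (Sn n) R'"
    using lattice_congruence_equiv unfolding essential_congruences_def by auto
  moreover have "Sn n // R = Sn n // R'"
    using eq unfolding quotient_graph_def by simp
  ultimately show "R = R'"
    by (rule equiv_eq_of_quotient_eq)
qed

theorem mainTheorem8:
  fixes n :: nat
  assumes "n \<ge> 3"
  shows "2 ^ (2 ^ (n - 2)) \<le> card (essential_congruences n)
       \<and> card (essential_congruences n) \<le> 2 ^ (2 ^ n - 2 * n)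
       \<and> card (quotient_graph n ` essential_congruences n) = card (essential_congruences n)"
  using card_essential_congruences_ge[OF assms] card_essential_congruences_le[OF assms]
    card_image[OF inj_on_quotient_graph] by simp

end
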